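(* Let $\Theta$ be a non-empty finite set, let $\mathcal{S}$ be a measurable subset of $\Delta(\Theta)$, and fix an interview cost $c>0$. For two populations $\pi,\pi'\in\Delta(\mathcal{S})$ with $p_\pi=p_{\pi'}$, $\pi' \mathrel{M} \pi$ holds if and only if either (i) there is systematic ex-ante discrimination against $\pi$, or (ii) there is no ex-ante discrimination.
   Context: $\Delta(\Theta)$ denotes the set of probability distributions on $\Theta$ (with its Borel $\sigma$-algebra). A population is a probability measure $\pi\in\Delta(\mathcal{S})$; its skill distribution is $p_\pi(\theta)=\int_{\mathcal{S}} s(\theta)\,\pi(\mathrm{d}s)$ for $\theta\in\Theta$. For a non-empty finite $A\subset\mathbb{R}^\Theta$, $v_A(s)=\max_{a\in A}\sum_{\theta\in\Theta}a(\theta)s(\theta)$. A firm is a pair $(A,\alpha)$ with $A$ a non-empty finite subset of $\mathbb{R}^\Theta$ and $0<\alpha\le 1$. Firm $(A,\alpha)$ excludes population $\pi$ if $\alpha\int_{\mathcal{S}}\max\{v_A,0\}\,\mathrm{d}\pi\le c$. For $\pi,\pi'$ with $p_\pi=p_{\pi'}$: there is systematic ex-ante discrimination against $\pi$ if every firm that excludes $\pi'$ also excludes $\pi$, and some firm excludes $\pi$ but not $\pi'$. There is unsystematic ex-ante discrimination if there is a firm that excludes $\pi$ but not $\pi'$ and a firm that excludes $\pi'$ but not $\pi$. There is no ex-ante discrimination if there is neither systematic ex-ante discrimination (against $\pi$ or against $\pi'$) nor unsystematic ex-ante discrimination. $\pi' \mathrel{M} \pi$ means $\int_{\mathcal{S}}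 h\,\mathrm{d}\pi'\ge\int_{\mathcal{S}} h\,\mathrm{d}\pi$ for every convex continuous $h:\Delta(\Theta)\to\mathbb{R}$. *)

theory Defs
  imports "HOL-Analysis.Analysis" "HOL-Probability.Probability"
begin

text \<open>Theta is modelled by a finite type 'n; a skill profile s in Delta(Theta)
  is a vector s :: real^'n with nonnegative entries summing to 1.\<close>

definition prob_simplex :: "(real^'n::finite) set" where
  "prob_simplex = {s. (\<forall>\<theta>. 0 \<le> s $ \<theta>) \<and> (\<Sum>\<theta>\<in>UNIV. s $ \<theta>) = 1}"

definition population :: "(real^'n::finite) set \<Rightarrow> (real^'n) measure \<Rightarrow> bool" where
  "population S \<pi> \<longleftrightarrow> prob_space \<pi> \<and> sets \<pi> = sets (restrict_space borel S)"

definition skill_dist :: "(real^'n::finite) measure \<Rightarrow> 'n \<Rightarrow> real" where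
  "skill_dist \<pi> \<theta> = (\<integral>s. s $ \<theta> \<partial>\<pi>)"

definition vA :: "(real^'n::finite) set \<Rightarrow> real^'n \<Rightarrow> real" where
  "vA A s = Max ((\<lambda>a. \<Sum>\<theta>\<in>UNIV. a $ \<theta> * s $ \<theta>) ` A)"

definition firm :: "(real^'n::finite) set \<Rightarrow> real \<Rightarrow> bool" where
  "firm A \<alpha> \<longleftrightarrow> finite A \<and> A \<noteq> {} \<and> 0 < \<alpha> \<and> \<alpha> \<le> 1"

definition excludes :: "real \<Rightarrow> (real^'n::finite) set \<Rightarrow> real \<Rightarrow> (real^'n) measure \<Rightarrow> bool" where
  "excludes c A \<alpha> \<pi> \<longleftrightarrow> \<alpha> * (\<integral>s. max (vA A s) 0 \<partial>\<pi>) \<le> c"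

definition systematic_disc :: "real \<Rightarrow> (real^'n::finite) measure \<Rightarrow> (real^'n) measure \<Rightarrow> bool" where
  "systematic_disc c \<pi> \<pi>' \<longleftrightarrow>
     (\<forall>A \<alpha>. firm A \<alpha> \<longrightarrow> excludes c A \<alpha> \<pi>' \<longrightarrow> excludes c A \<alpha> \<pi>) \<and>
     (\<exists>A \<alpha>. firm A \<alpha> \<and> excludes c A \<alpha> \<pi> \<and> \<not> excludes c A \<alpha> \<pi>')"

definition unsystematic_disc :: "real \<Rightarrow> (real^'n::finite) measure \<Rightarrow> (real^'n) measure \<Rightarrow> bool" where
  "unsystematic_disc c \<pi> \<pi>' \<longleftrightarrow>
     (\<exists>A \<alpha>. firm A \<alpha> \<and> excludes c A \<alpha> \<pi> \<and> \<not> excludes c A \<alpha> \<pi>') \<and>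
     (\<exists>A \<alpha>. firm A \<alpha> \<and> excludes c A \<alpha> \<pi>' \<and> \<not> excludes c A \<alpha> \<pi>)"

definition no_disc :: "real \<Rightarrow> (real^'n::finite) measure \<Rightarrow> (real^'n) measure \<Rightarrow> bool" where
  "no_disc c \<pi> \<pi>' \<longleftrightarrow>
     \<not> systematic_disc c \<pi> \<pi>' \<and> \<not> systematic_disc c \<pi>' \<pi> \<and> \<not> unsystematic_disc c \<pi> \<pi>'"

definition M_order :: "(real^'n::finite) measure \<Rightarrow> (real^'n) measure \<Rightarrow> bool" where
  "M_order \<pi>' \<pi> \<longleftrightarrow>
     (\<forall>h. convex_on prob_simplex h \<and> continuous_on prob_simplex h \<longrightarrow>
          (\<integral>s. h s \<partial>\<pi>') \<ge> (\<integral>s. h s \<partial>\<pi>))"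

end

theory Submission
  imports Defs
begin

text \<open>Exclusion only depends on the interview values \<open>\<integral> max v\<^sub>A 0 d\<pi>\<close>, and scaling the menu
  \<open>A\<close> scales its interview value. Hence (as \<open>c > 0\<close>) "every firm that excludes \<open>\<pi>'\<close> also
  excludes \<open>\<pi>\<close>" says exactly that every interview value is at least as large under \<open>\<pi>'\<close> as
  under \<open>\<pi>\<close>. The functions \<open>max v\<^sub>A 0\<close> are convex and continuous, which gives one direction.
  Conversely, a continuous convex function on the simplex is the supremum of its affine minorants,
  affine functions are linear on the simplex, and by compactness finitely many of them
  approximate it uniformly; so, shifted to be nonnegative, it is a uniform limit of functions
  \<open>max v\<^sub>A 0\<close>.\<close>

lemma vA_eq_Max_inner: "vA A s = Max ((\<lambda>a. inner a s) ` A)"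
  unfolding vA_def inner_vec_def by simp

lemma inner_le_vA: "finite A \<Longrightarrow> a \<in> A \<Longrightarrow> inner a s \<le> vA A s"
  unfolding vA_eq_Max_inner by (rule Max_ge) auto

lemma vA_attained:
  assumes "finite A" "A \<noteq> {}"
  obtains a where "a \<in> A" "vA A s = inner a s"
proof -
  have "Max ((\<lambda>a. inner a s) ` A) \<in> (\<lambda>a. inner a s) ` A"
    using assms by (intro Max_in) auto
  then show ?thesis
    using that unfolding vA_eq_Max_inner by auto
qed

lemma vA_scaleR:
  assumes "finite A" "A \<noteq> {}" "t \<ge> 0"
  shows "vA ((*\<^sub>R) t ` A) s = t * vA A s"
proof -
  have "vA ((*\<^sub>R) t ` A) s = Max ((*) t ` (\<lambda>a. inner a s) ` A)"
    unfolding vA_eq_Max_inner image_image by simp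
  also have "\<dots> = t * Max ((\<lambda>a. inner a s) ` A)"
    using assms by (intro mono_Max_commute[symmetric]) (auto simp: mono_def mult_left_mono)
  finally show ?thesis
    unfolding vA_eq_Max_inner .
qed

lemma convex_on_vA:
  assumes "finite A" "A \<noteq> {}"
  shows "convex_on UNIV (vA A)"
proof (rule convex_onI)
  fix x y and t :: real
  assume t: "0 < t" "t < 1"
  obtain a where a: "a \<in> A" "vA A ((1 - t) *\<^sub>R x + t *\<^sub>R y) = inner a ((1 - t) *\<^sub>R x + t *\<^sub>R y)"
    using vA_attained[OF assms] by metis
  have "inner a ((1 - t) *\<^sub>R x + t *\<^sub>R y) = (1 - t) * inner a x + t * inner a y"
    by (simp add: inner_add_right)
  also have "\<dots> \<le> (1 - t) * vA A x + t * vA A y"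
    using t inner_le_vA[OF assms(1) a(1)] by (intro add_mono mult_left_mono) auto
  finally show "vA A ((1 - t) *\<^sub>R x + t *\<^sub>R y) \<le> (1 - t) * vA A x + t * vA A y"
    using a(2) by simp
qed simp

lemma convex_on_max:
  assumes f: "convex_on S f" and g: "convex_on S g"
  shows "convex_on S (\<lambda>x. max (f x) (g x))"
proof (rule convex_onI)
  fix t :: real and x y assume t: "0 < t" "t < 1" and xy: "x \<in> S" "y \<in> S"
  have "f ((1 - t) *\<^sub>R x + t *\<^sub>R y) \<le> (1 - t) * f x + t * f y"
    using t xy by (intro convex_onD[OF f]) auto
  also have "\<dots> \<le> (1 - t) * max (f x) (g x) + t * max (f y) (g y)"
    using t by (intro add_mono mult_left_mono) auto
  moreover have "g ((1 - t) *\<^sub>R x + t *\<^sub>R y) \<le> (1 - t) * g x + t * g y"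
    using t xy by (intro convex_onD[OF g]) auto
  moreover have "\<dots> \<le> (1 - t) * max (f x) (g x) + t * max (f y) (g y)"
    using t by (intro add_mono mult_left_mono) auto
  ultimately show "max (f ((1 - t) *\<^sub>R x + t *\<^sub>R y)) (g ((1 - t) *\<^sub>R x + t *\<^sub>R y))
      \<le> (1 - t) * max (f x) (g x) + t * max (f y) (g y)"
    by simp
qed (rule convex_on_imp_convex[OF f])

lemma convex_on_max_vA_0:
  assumes "finite A" "A \<noteq> {}"
  shows "convex_on UNIV (\<lambda>s. max (vA A s) 0)"
  using convex_on_max[OF convex_on_vA[OF assms]] by (simp add: convex_on_const)

lemma continuous_on_max_vA_0:
  assumes "finite A" "A \<noteq> {}"
  shows "continuous_on T (\<lambda>s. max (vA A s) 0)"
  using convex_on_continuous[OF open_UNIV convex_on_max_vA_0[OF assms]]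
  by (rule continuous_on_subset) simp

lemma convex_prob_simplex: "convex (prob_simplex :: (real^'n::finite) set)"
  unfolding convex_def prob_simplex_def
  by (auto simp: sum.distrib sum_distrib_left[symmetric])

lemma closed_prob_simplex: "closed (prob_simplex :: (real^'n::finite) set)"
proof -
  have eq: "(prob_simplex :: (real^'n) set) =
      (\<Inter>i. {s. 0 \<le> s $ i}) \<inter> {s. (\<Sum>\<theta>\<in>UNIV. s $ \<theta>) = 1}"
    unfolding prob_simplex_def by auto
  show ?thesis
    unfolding eq by (intro closed_Int closed_INT ballI closed_Collect_le closed_Collect_eq continuous_intros)
qed

lemma compact_prob_simplex: "compact (prob_simplex :: (real^'n::finite) set)"
proof -
  have "prob_simplex \<subseteq> cbox (0::real^'n) 1"
  proof
    fix s :: "real^'n" assume s: "s \<in> prob_simplex"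
    have "s $ i \<le> (\<Sum>\<theta>\<in>UNIV. s $ \<theta>)" for i
      using s unfolding prob_simplex_def by (intro member_le_sum) auto
    then show "s \<in> cbox 0 1"
      using s unfolding prob_simplex_def by (auto simp: mem_box_cart)
  qed
  then show ?thesis
    using closed_prob_simplex bounded_cbox bounded_subset compact_eq_bounded_closed by blast
qed

lemma prob_simplex_nonempty: "prob_simplex \<noteq> ({} :: (real^'n::finite) set)"
proof -
  have "(\<chi> i. 1 / real CARD('n)) \<in> (prob_simplex :: (real^'n) set)"
    unfolding prob_simplex_def by simp
  then show ?thesis by blast
qed

lemma inner_const_vec_prob_simplex: "s \<in> prob_simplex \<Longrightarrow> inner (\<chi> i. b) s = b"
  unfolding prob_simplex_def inner_vec_def by (simp flip: sum_distrib_left)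

lemma convex_on_affine_minorant_near:
  fixes h :: "'a::euclidean_space \<Rightarrow> real"
  assumes cv: "convex_on C h" and ct: "continuous_on C h" and "closed C"
    and "x0 \<in> C" and "e > 0"
  obtains a b where "\<And>x. x \<in> C \<Longrightarrow> inner a x + b \<le> h x" and "h x0 - e < inner a x0 + b"
proof -
  have "epigraph C h = (C \<times> UNIV) \<inter> (\<lambda>xy. h (fst xy) - snd xy) -` {..0}"
    unfolding epigraph_def by auto
  moreover have "closed ((C \<times> UNIV) \<inter> (\<lambda>xy. h (fst xy) - snd xy) -` {..0})"
    using \<open>closed C\<close>
    by (intro continuous_closed_preimage continuous_intros continuous_on_compose2[OF ct] closed_Times)
      auto
  ultimately have "closed (epigraph C h)" by simp
  moreover have "(x0, h x0 - e) \<notin> epigraph C h"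
    using \<open>e > 0\<close> by (simp add: epigraph_def)
  ultimately obtain p d where p: "inner p (x0, h x0 - e) < d" "\<forall>z\<in>epigraph C h. d < inner p z"
    using separating_hyperplane_closed_point[OF convex_epigraphI[OF cv]] by blast
  obtain a1 b1 where p_eq: "p = (a1, b1)" by (cases p)
  have above: "d < inner a1 x + b1 * h x" if "x \<in> C" for x
    using p(2) that unfolding p_eq epigraph_def by auto
  have below: "inner a1 x0 + b1 * (h x0 - e) < d"
    using p(1) unfolding p_eq by simp
  have "b1 * e > 0"
    using above[OF \<open>x0 \<in> C\<close>] below by (simp add: algebra_simps)
  then have "b1 > 0"
    using \<open>e > 0\<close> by (simp add: zero_less_mult_iff)
  have affine: "inner (- (1 / b1) *\<^sub>R a1) x + d / b1 = (d - inner a1 x) / b1" for x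
    by (simp add: diff_divide_distrib)
  show ?thesis
  proof (rule that[of "- (1 / b1) *\<^sub>R a1" "d / b1", unfolded affine])
    fix x assume "x \<in> C"
    then show "(d - inner a1 x) / b1 \<le> h x"
      using above[of x] \<open>b1 > 0\<close> by (simp add: pos_divide_le_eq mult.commute)
  next
    show "h x0 - e < (d - inner a1 x0) / b1"
      using below \<open>b1 > 0\<close> by (subst pos_less_divide_eq) (simp_all add: algebra_simps)
  qed
qed

lemma vA_uniform_approx_on_compact:
  fixes h :: "real^'n::finite \<Rightarrow> real"
  assumes "compact K" "K \<noteq> {}" "continuous_on K h"
    and minorant: "\<And>x0. x0 \<in> K \<Longrightarrow> \<exists>a. (\<forall>x\<in>K. inner a x \<le> h x) \<and> h x0 - e < inner a x0"
  obtains A where "finite A" "A \<noteq> {}"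
    and "\<And>x. x \<in> K \<Longrightarrow> vA A x \<le> h x" and "\<And>x. x \<in> K \<Longrightarrow> h x - e < vA A x"
proof -
  obtain af where af_le: "\<And>x0 x. x0 \<in> K \<Longrightarrow> x \<in> K \<Longrightarrow> inner (af x0) x \<le> h x"
    and af_near: "\<And>x0. x0 \<in> K \<Longrightarrow> h x0 - e < inner (af x0) x0"
    using minorant by metis
  define U where "U x0 = K \<inter> (\<lambda>x. inner (af x0) x - h x) -` {-e<..}" for x0
  have "openin (top_of_set K) (U x0)" for x0
    unfolding U_def by (intro continuous_openin_preimage_gen continuous_intros assms(3))
  moreover have "K \<subseteq> \<Union>(U ` K)"
  proof
    fix x assume "x \<in> K"
    then have "x \<in> U x"
      using af_near[of x] by (simp add: U_def)
    with \<open>x \<in> K\<close> show "x \<in> \<Union>(U ` K)" by blast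
  qed
  ultimately obtain D where D: "D \<subseteq> U ` K" "finite D" "K \<subseteq> \<Union>D"
    using compact_eq_openin_cover[THEN iffD1, OF \<open>compact K\<close>, rule_format, of "U ` K"] by blast
  then obtain C where C: "C \<subseteq> K" "finite C" "K \<subseteq> \<Union>(U ` C)"
    using finite_subset_image[OF D(2,1)] by blast
  show ?thesis
  proof (rule that[of "af ` C"])
    show "finite (af ` C)" "af ` C \<noteq> {}"
      using C \<open>K \<noteq> {}\<close> by auto
    fix x assume "x \<in> K"
    obtain a where "a \<in> af ` C" "vA (af ` C) x = inner a x"
      using vA_attained[OF \<open>finite (af ` C)\<close> \<open>af ` C \<noteq> {}\<close>] by metis
    then show "vA (af ` C) x \<le> h x"
      using af_le C(1) \<open>x \<in> K\<close> by auto
    obtain x0 where "x0 \<in> C" "x \<in> U x0"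
      using C(3) \<open>x \<in> K\<close> by blast
    then have "h x - e < inner (af x0) x"
      by (simp add: U_def)
    also have "\<dots> \<le> vA (af ` C) x"
      using \<open>x0 \<in> C\<close> C(2) by (intro inner_le_vA) auto
    finally show "h x - e < vA (af ` C) x" .
  qed
qed

lemma convex_on_prob_simplex_vA_approx:
  assumes "convex_on prob_simplex h" "continuous_on prob_simplex h" "e > 0"
  obtains A where "finite A" "A \<noteq> {}"
    and "\<And>s. s \<in> prob_simplex \<Longrightarrow> vA A s \<le> h s"
    and "\<And>s. s \<in> prob_simplex \<Longrightarrow> h s - e < vA A s"
proof (rule vA_uniform_approx_on_compact[OF compact_prob_simplex prob_simplex_nonempty assms(2)])
  fix s0 :: "real^'a" assume "s0 \<in> prob_simplex"
  then obtain a b where "\<And>s. s \<in> prob_simplex \<Longrightarrow> inner a s + b \<le> h s" "h s0 - e < inner a s0 + b"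
    using convex_on_affine_minorant_near[OF assms(1,2) closed_prob_simplex _ assms(3)] by metis
  moreover have "inner (a + (\<chi> i. b)) s = inner a s + b" if "s \<in> prob_simplex" for s
    using that by (simp add: inner_add_left inner_const_vec_prob_simplex)
  ultimately show "\<exists>a. (\<forall>s\<in>prob_simplex. inner a s \<le> h s) \<and> h s0 - e < inner a s0"
    using \<open>s0 \<in> prob_simplex\<close> by (metis (no_types, lifting))
qed (use that in blast)

definition interview_value :: "(real^'n::finite) set \<Rightarrow> (real^'n) measure \<Rightarrow> real" where
  "interview_value A \<pi> = (\<integral>s. max (vA A s) 0 \<partial>\<pi>)"

lemma excludes_iff_interview_value: "excludes c A \<alpha> \<pi> \<longleftrightarrow> \<alpha> * interview_value A \<pi> \<le> c"
  unfolding excludes_def interview_value_def ..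

lemma interview_value_nonneg: "0 \<le> interview_value A \<pi>"
  unfolding interview_value_def by (intro integral_nonneg_AE AE_I2) simp

lemma interview_value_scaleR:
  assumes "finite A" "A \<noteq> {}" "t \<ge> 0"
  shows "interview_value ((*\<^sub>R) t ` A) \<pi> = t * interview_value A \<pi>"
proof -
  have "max (t * x) 0 = t * max x 0" for x :: real
    using \<open>t \<ge> 0\<close> by (cases "t = 0") (auto simp: max_def mult_le_0_iff)
  then show ?thesis
    using assms by (simp add: interview_value_def vA_scaleR)
qed

lemma population_prob_space: "population S \<pi> \<Longrightarrow> prob_space \<pi>"
  unfolding population_def by blast

lemma space_population: "population S \<pi> \<Longrightarrow> space \<pi> = S"
  unfolding population_def by (metis sets_eq_imp_space_eq space_restrict_space space_borel inf_top_right)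

lemma integrable_population_continuous:
  fixes f :: "real^'n::finite \<Rightarrow> real"
  assumes pop: "population S \<pi>" and "S \<subseteq> K" "compact K" "continuous_on K f"
  shows "integrable \<pi> f"
proof -
  interpret prob_space \<pi>
    using pop by (rule population_prob_space)
  have sets: "sets \<pi> = sets (restrict_space borel S)"
    using pop unfolding population_def by blast
  have meas: "f \<in> borel_measurable \<pi>"
    unfolding measurable_cong_sets[OF sets refl]
    using continuous_on_subset[OF assms(4,2)] by (rule borel_measurable_continuous_on_restrict)
  obtain B where "\<forall>x\<in>K. norm (f x) \<le> B"
    using compact_imp_bounded[OF compact_continuous_image[OF assms(4,3)]] by (auto simp: bounded_iff)
  then have "AE x in \<pi>. norm (f x) \<le> B"
    using space_population[OF pop] \<open>S \<subseteq> K\<close> by (intro AE_I2) auto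
  then show ?thesis
    using meas by (rule integrable_const_bound)
qed

lemma integral_mono_population:
  fixes f g :: "real^'n::finite \<Rightarrow> real"
  assumes "population S \<pi>" "S \<subseteq> K" "compact K" "continuous_on K f" "continuous_on K g"
    and "\<And>x. x \<in> K \<Longrightarrow> f x \<le> g x"
  shows "(\<integral>x. f x \<partial>\<pi>) \<le> (\<integral>x. g x \<partial>\<pi>)"
proof (rule integral_mono)
  show "integrable \<pi> f" "integrable \<pi> g"
    using assms(1-5) by (auto intro: integrable_population_continuous)
  show "f x \<le> g x" if "x \<in> space \<pi>" for x
    using that assms(2,6) space_population[OF assms(1)] by blast
qed

lemma integral_add_const_population:
  fixes f :: "real^'n::finite \<Rightarrow> real"
  assumes "population S \<pi>" "integrable \<pi> f"
  shows "(\<integral>x. f x + k \<partial>\<pi>) = (\<integral>x. f x \<partial>\<pi>) + k"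
proof -
  interpret prob_space \<pi>
    using assms(1) by (rule population_prob_space)
  show ?thesis
    using assms(2) by (simp add: prob_space)
qed

lemma interview_value_le_if_M_order:
  assumes "M_order \<pi>' \<pi>" "finite A" "A \<noteq> {}"
  shows "interview_value A \<pi> \<le> interview_value A \<pi>'"
  using assms(1) convex_on_subset[OF convex_on_max_vA_0[OF assms(2,3)] subset_UNIV convex_prob_simplex]
    continuous_on_max_vA_0[OF assms(2,3)]
  unfolding M_order_def interview_value_def by blast

lemma M_order_if_interview_value_le:
  fixes \<pi> \<pi>' :: "(real^'n::finite) measure"
  assumes pop: "population S \<pi>" "population S \<pi>'" and "S \<subseteq> prob_simplex"
    and le: "\<And>A. finite A \<Longrightarrow> A \<noteq> {} \<Longrightarrow> interview_value A \<pi> \<le> interview_value A \<pi>'"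
  shows "M_order \<pi>' \<pi>"
  unfolding M_order_def
proof (intro allI impI, elim conjE)
  fix h :: "real^'n \<Rightarrow> real"
  assume cv: "convex_on prob_simplex h" and ct: "continuous_on prob_simplex h"
  obtain m where m: "\<And>s. s \<in> prob_simplex \<Longrightarrow> h m \<le> h s"
    using continuous_attains_inf[OF compact_prob_simplex prob_simplex_nonempty ct] by blast
  define g where "g s = h s + - h m" for s
  have cv_g: "convex_on prob_simplex g"
    unfolding g_def by (intro convex_on_add cv) (simp add: convex_on_const convex_prob_simplex)
  have ct_g: "continuous_on prob_simplex g"
    unfolding g_def by (intro continuous_intros ct)
  have g_nonneg: "\<And>s. s \<in> prob_simplex \<Longrightarrow> 0 \<le> g s"
    using m by (simp add: g_def)
  note integrable = integrable_population_continuous[OF _ \<open>S \<subseteq> prob_simplex\<close> compact_prob_simplex]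
  note integral_mono = integral_mono_population[OF _ \<open>S \<subseteq> prob_simplex\<close> compact_prob_simplex]
  have "(\<integral>s. g s \<partial>\<pi>) \<le> (\<integral>s. g s \<partial>\<pi>') + e" if "e > 0" for e
  proof -
    obtain A where A: "finite A" "A \<noteq> {}"
      and below: "\<And>s. s \<in> prob_simplex \<Longrightarrow> vA A s \<le> g s"
      and near: "\<And>s. s \<in> prob_simplex \<Longrightarrow> g s - e < vA A s"
      using convex_on_prob_simplex_vA_approx[OF cv_g ct_g \<open>e > 0\<close>] by blast
    note max_vA_cont = continuous_on_max_vA_0[OF A]
    have "(\<integral>s. g s \<partial>\<pi>) \<le> (\<integral>s. max (vA A s) 0 + e \<partial>\<pi>)"
      using near by (intro integral_mono pop(1) ct_g continuous_intros max_vA_cont) force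
    also have "\<dots> = interview_value A \<pi> + e"
      unfolding interview_value_def
      by (rule integral_add_const_population[OF pop(1) integrable[OF pop(1) max_vA_cont]])
    also have "\<dots> \<le> interview_value A \<pi>' + e"
      using le[OF A] by simp
    also have "\<dots> \<le> (\<integral>s. g s \<partial>\<pi>') + e"
      unfolding interview_value_def using below g_nonneg
      by (simp add: integral_mono[OF pop(2) max_vA_cont ct_g])
    finally show ?thesis .
  qed
  then have "(\<integral>s. g s \<partial>\<pi>) \<le> (\<integral>s. g s \<partial>\<pi>')"
    by (rule field_le_epsilon)
  moreover have "(\<integral>s. g s \<partial>M) = (\<integral>s. h s \<partial>M) + - h m" if "population S M" for M
    unfolding g_def using that integrable[OF that ct] by (rule integral_add_const_population)
  ultimately show "(\<integral>s. h s \<partial>\<pi>) \<le> (\<integral>s. h s \<partial>\<pi>')"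
    using pop by simp
qed

lemma M_order_iff_interview_value_le:
  assumes "population S \<pi>" "population S \<pi>'" "S \<subseteq> prob_simplex"
  shows "M_order \<pi>' \<pi> \<longleftrightarrow>
    (\<forall>A. finite A \<and> A \<noteq> {} \<longrightarrow> interview_value A \<pi> \<le> interview_value A \<pi>')"
  using interview_value_le_if_M_order M_order_if_interview_value_le[OF assms] by blast

lemma excluded_whenever_iff_interview_value_le:
  assumes "c > 0"
  shows "(\<forall>A \<alpha>. firm A \<alpha> \<longrightarrow> excludes c A \<alpha> \<pi>' \<longrightarrow> excludes c A \<alpha> \<pi>) \<longleftrightarrow>
    (\<forall>A. finite A \<and> A \<noteq> {} \<longrightarrow> interview_value A \<pi> \<le> interview_value A \<pi>')"
proof
  assume excl: "\<forall>A \<alpha>. firm A \<alpha> \<longrightarrow> excludes c A \<alpha> \<pi>' \<longrightarrow> excludes c A \<alpha> \<pi>"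
  show "\<forall>A. finite A \<and> A \<noteq> {} \<longrightarrow> interview_value A \<pi> \<le> interview_value A \<pi>'"
  proof (intro allI impI, elim conjE, rule ccontr)
    fix A assume A: "finite A" "A \<noteq> {}" and "\<not> interview_value A \<pi> \<le> interview_value A \<pi>'"
    define G G' where "G = interview_value A \<pi>" and "G' = interview_value A \<pi>'"
    have "G' < G" "0 \<le> G'"
      using \<open>\<not> _ \<le> _\<close> interview_value_nonneg by (auto simp: G_def G'_def)
    define t where "t = 2 * c / (G + G')"
    \<comment> \<open>chosen so that \<open>t * G' \<le> c < t * G\<close>\<close>
    have "t > 0"
      using \<open>G' < G\<close> \<open>0 \<le> G'\<close> \<open>c > 0\<close> by (simp add: t_def)
    have "t * G' \<le> c"
    proof -
      have "2 * c * G' \<le> c * (G + G')"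
        using \<open>G' < G\<close> \<open>c > 0\<close> by (simp add: algebra_simps)
      then show ?thesis
        using \<open>G' < G\<close> \<open>0 \<le> G'\<close> by (simp add: t_def divide_simps)
    qed
    have "c < t * G"
    proof -
      have "c * (G + G') < 2 * c * G"
        using \<open>G' < G\<close> \<open>c > 0\<close> by (simp add: algebra_simps)
      then show ?thesis
        using \<open>G' < G\<close> \<open>0 \<le> G'\<close> by (simp add: t_def divide_simps)
    qed
    have "firm ((*\<^sub>R) t ` A) 1"
      using A unfolding firm_def by auto
    moreover have "excludes c ((*\<^sub>R) t ` A) 1 \<pi>'"
      using \<open>t * G' \<le> c\<close> A \<open>t > 0\<close>
      by (simp add: excludes_iff_interview_value interview_value_scaleR G'_def)
    ultimately have "excludes c ((*\<^sub>R) t ` A) 1 \<pi>"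
      using excl by blast
    then show False
      using \<open>c < t * G\<close> A \<open>t > 0\<close>
      by (simp add: excludes_iff_interview_value interview_value_scaleR G_def)
  qed
next
  assume "\<forall>A. finite A \<and> A \<noteq> {} \<longrightarrow> interview_value A \<pi> \<le> interview_value A \<pi>'"
  then show "\<forall>A \<alpha>. firm A \<alpha> \<longrightarrow> excludes c A \<alpha> \<pi>' \<longrightarrow> excludes c A \<alpha> \<pi>"
    unfolding firm_def excludes_iff_interview_value by (meson mult_left_mono less_imp_le order_trans)
qed

lemma systematic_disc_or_no_disc_iff:
  "systematic_disc c \<pi> \<pi>' \<or> no_disc c \<pi> \<pi>' \<longleftrightarrow>
    (\<forall>A \<alpha>. firm A \<alpha> \<longrightarrow> excludes c A \<alpha> \<pi>' \<longrightarrow> excludes c A \<alpha> \<pi>)"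
  unfolding systematic_disc_def no_disc_def unsystematic_disc_def by blast

theorem lemma1:
  fixes S :: "(real^'n::finite) set" and c :: real
    and \<pi> \<pi>' :: "(real^'n) measure"
  assumes "S \<in> sets borel" and "S \<subseteq> prob_simplex" and "c > 0"
    and "population S \<pi>" and "population S \<pi>'"
    and "skill_dist \<pi> = skill_dist \<pi>'"
  shows "M_order \<pi>' \<pi> \<longleftrightarrow> systematic_disc c \<pi> \<pi>' \<or> no_disc c \<pi> \<pi>'"
proof -
  have "M_order \<pi>' \<pi> \<longleftrightarrow>
      (\<forall>A. finite A \<and> A \<noteq> {} \<longrightarrow> interview_value A \<pi> \<le> interview_value A \<pi>')"
    using assms(4,5,2) by (rule M_order_iff_interview_value_le)
  also have "\<dots> \<longleftrightarrow> (\<forall>A \<alpha>. firm A \<alpha> \<longrightarrow> excludes c A \<alpha> \<pi>' \<longrightarrow> excludes c A \<alpha> \<pi>)"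
    using assms(3) by (rule excluded_whenever_iff_interview_value_le[symmetric])
  also have "\<dots> \<longleftrightarrow> systematic_disc c \<pi> \<pi>' \<or> no_disc c \<pi> \<pi>'"
    by (rule systematic_disc_or_no_disc_iff[symmetric])
  finally show ?thesis .
qed

end
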